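(* Let $\mathbb{X}=\ell_p^2$ (the real space $\mathbb{R}^2$ with the $p$-norm), where $p\in\mathbb{N}$ and $p>2$. Let $T\in\mathbb{L}(\mathbb{X},\mathbb{X})$ be an isometry. Then there exists $\epsilon_0>0$ such that for every $0<\epsilon<\epsilon_0$, $T$ is the only uniform $\epsilon$-BPB approximation of $T$.
   Context: $S_{\mathbb{X}}$ is the unit sphere. For $T\in\mathbb{L}(\mathbb{X},\mathbb{X})$ with $\|T\|=1$ and fixed $\epsilon>0$, an operator $A\in\mathbb{L}(\mathbb{X},\mathbb{X})$ with $\|A\|=1$ is a uniform $\epsilon$-BPB approximation of $T$ if there exists $\delta(\epsilon)>0$ such that whenever $x_0\in S_{\mathbb{X}}$ satisfies $\|Tx_0\|>1-\delta(\epsilon)$, there exists $u_0\in S_{\mathbb{X}}$ with $\|Au_0\|=1$, $\|u_0-x_0\|<\epsilon$ and $\|A-T\|<\epsilon$. *)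

theory Defs
  imports "HOL-Analysis.Analysis"
begin

definition pnorm :: "nat \<Rightarrow> real \<times> real \<Rightarrow> real" where
  "pnorm p v = (\<bar>fst v\<bar> ^ p + \<bar>snd v\<bar> ^ p) powr (1 / real p)"

definition psphere :: "nat \<Rightarrow> (real \<times> real) set" where
  "psphere p = {x. pnorm p x = 1}"

definition popnorm :: "nat \<Rightarrow> (real \<times> real \<Rightarrow> real \<times> real) \<Rightarrow> real" where
  "popnorm p A = (SUP x\<in>psphere p. pnorm p (A x))"

definition p_isometry :: "nat \<Rightarrow> (real \<times> real \<Rightarrow> real \<times> real) \<Rightarrow> bool" where
  "p_isometry p T \<longleftrightarrow> linear T \<and> (\<forall>x. pnorm p (T x) = pnorm p x)"

text \<open>A is a uniform eps-BPB approximation of T (T assumed of norm one).\<close>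
definition uniform_BPB_approx ::
  "nat \<Rightarrow> real \<Rightarrow> (real \<times> real \<Rightarrow> real \<times> real) \<Rightarrow> (real \<times> real \<Rightarrow> real \<times> real) \<Rightarrow> bool" where
  "uniform_BPB_approx p \<epsilon> T A \<longleftrightarrow>
     linear A \<and> popnorm p A = 1 \<and>
     (\<exists>\<delta>>0. \<forall>x0\<in>psphere p. pnorm p (T x0) > 1 - \<delta> \<longrightarrow>
        (\<exists>u0\<in>psphere p. pnorm p (A u0) = 1 \<and> pnorm p (u0 - x0) < \<epsilon>
                          \<and> popnorm p (\<lambda>x. A x - T x) < \<epsilon>))"

end

theory Submission
  imports Defs "HOL-Computational_Algebra.Polynomial"
begin

(* Put B = T^-1 A for an admissible approximation A. Then B is eps-close to the identity on the
   sphere and attains norm one within eps of every point of it. Take p + 1 points of the sphere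
   in the open first quadrant whose first coordinates are more than 2 eps apart; the nearby
   norm-one points u_k of B and their images B u_k stay in that quadrant, so with the matrix
   (b_ij) of B and s_k = u_k1 / u_k2 both sides of
     (b11 s + b12)^p + (b21 s + b22)^p = s^p + 1
   agree at p + 1 distinct values of s. Both sides being polynomials of degree at most p, the
   identity holds for all s, and likewise with the two coordinates exchanged. The coefficients
   of s give b11 b12^(p-1) + b21 b22^(p-1) = 0 = b12 b11^(p-1) + b22 b21^(p-1), which for p >= 3
   and B near the identity forces b12 = b21 = 0, hence B = id and A = T. *)

section \<open>The p-norm on the plane\<close>

definition open_quadrant :: "(real \<times> real) set" where
  "open_quadrant = {v. 0 < fst v \<and> 0 < snd v}"

lemma pnorm_nonneg: "0 \<le> pnorm p v"
  unfolding pnorm_def by simp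

lemma power_powr_inverse:
  fixes x :: real
  assumes "0 \<le> x" "p > 0"
  shows "(x powr (1 / real p)) ^ p = x"
proof -
  have "(x powr (1 / real p)) ^ p = (x powr (1 / real p)) powr real p"
    using assms by (simp add: powr_realpow')
  also have "\<dots> = x"
    using assms by (simp add: powr_powr)
  finally show ?thesis .
qed

lemma pnorm_power:
  assumes "p > 0"
  shows "pnorm p v ^ p = \<bar>fst v\<bar> ^ p + \<bar>snd v\<bar> ^ p"
  unfolding pnorm_def using assms by (simp add: power_powr_inverse)

lemma psphere_iff:
  assumes "p > 0"
  shows "v \<in> psphere p \<longleftrightarrow> \<bar>fst v\<bar> ^ p + \<bar>snd v\<bar> ^ p = 1"
proof
  assume "v \<in> psphere p"
  then show "\<bar>fst v\<bar> ^ p + \<bar>snd v\<bar> ^ p = 1"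
    using pnorm_power[OF assms, of v] unfolding psphere_def by simp
qed (simp add: psphere_def pnorm_def)

lemma psphere_quadrant_iff:
  assumes "p > 0" "v \<in> open_quadrant"
  shows "v \<in> psphere p \<longleftrightarrow> fst v ^ p + snd v ^ p = 1"
  using assms by (simp add: psphere_iff open_quadrant_def)

lemma abs_fst_le_pnorm:
  assumes "p > 0"
  shows "\<bar>fst v\<bar> \<le> pnorm p v"
proof -
  have "\<bar>fst v\<bar> ^ p \<le> pnorm p v ^ p"
    using pnorm_power[OF assms] by simp
  then show ?thesis
    using assms pnorm_nonneg by simp
qed

lemma abs_snd_le_pnorm:
  assumes "p > 0"
  shows "\<bar>snd v\<bar> \<le> pnorm p v"
proof -
  have "\<bar>snd v\<bar> ^ p \<le> pnorm p v ^ p"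
    using pnorm_power[OF assms] by simp
  then show ?thesis
    using assms pnorm_nonneg by simp
qed

lemma pnorm_eq_0_iff:
  assumes "p > 0"
  shows "pnorm p v = 0 \<longleftrightarrow> v = 0"
  using abs_fst_le_pnorm[OF assms, of v] abs_snd_le_pnorm[OF assms, of v] assms
  by (auto simp: prod_eq_iff pnorm_def)

lemma pnorm_le_abs_sum:
  assumes "p > 0"
  shows "pnorm p v \<le> 2 * (\<bar>fst v\<bar> + \<bar>snd v\<bar>)"
proof -
  let ?M = "\<bar>fst v\<bar> + \<bar>snd v\<bar>"
  have "pnorm p v ^ p \<le> 2 * ?M ^ p"
    using power_mono[of "\<bar>fst v\<bar>" ?M p] power_mono[of "\<bar>snd v\<bar>" ?M p]
    by (simp add: pnorm_power[OF assms])
  also have "\<dots> \<le> 2 ^ p * ?M ^ p"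
    using assms by (intro mult_right_mono) (auto simp: self_le_power)
  finally have "pnorm p v ^ p \<le> (2 * ?M) ^ p"
    by (simp only: power_mult_distrib)
  then show ?thesis
    using assms pnorm_nonneg by simp
qed

lemma basis_in_psphere:
  assumes "p > 0"
  shows "(1, 0) \<in> psphere p" "(0, 1) \<in> psphere p"
  using assms by (simp_all add: psphere_iff)

lemma psphere_point_with_fst:
  assumes "p > 0" "0 \<le> a" "a \<le> 1 / 2"
  defines "w \<equiv> (1 - a ^ p) powr (1 / real p)"
  shows "(a, w) \<in> psphere p" "1 / 2 \<le> w"
proof -
  have "a ^ p \<le> a ^ 1"
    using assms by (intro power_decreasing) auto
  then have lo: "1 / 2 \<le> 1 - a ^ p" "1 - a ^ p \<le> 1"
    using assms by auto
  have "w ^ p = 1 - a ^ p"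
    using lo assms unfolding w_def by (simp add: power_powr_inverse)
  then show "(a, w) \<in> psphere p"
    using assms unfolding w_def by (simp add: psphere_iff)
  have "1 - a ^ p = (1 - a ^ p) powr 1"
    using lo by simp
  also have "\<dots> \<le> w"
    unfolding w_def using lo assms by (intro powr_mono') auto
  finally show "1 / 2 \<le> w" using lo by linarith
qed

lemma open_quadrant_if_pnorm_diff_less:
  assumes "p > 0" "pnorm p (v - w) < r" "r \<le> fst w" "r \<le> snd w"
  shows "v \<in> open_quadrant"
  using abs_fst_le_pnorm[OF assms(1), of "v - w"] abs_snd_le_pnorm[OF assms(1), of "v - w"] assms(2-4)
  by (auto simp: open_quadrant_def)

section \<open>Linear maps, operator norm and isometries\<close>

lemma linear_pair_matrix:
  fixes L :: "real \<times> real \<Rightarrow> real \<times> real"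
  assumes "linear L"
  shows "L x = (fst (L (1, 0)) * fst x + fst (L (0, 1)) * snd x,
                snd (L (1, 0)) * fst x + snd (L (0, 1)) * snd x)"
proof -
  interpret L: linear L by (rule assms)
  have "L x = L (fst x *\<^sub>R (1, 0) + snd x *\<^sub>R (0, 1))"
    by (cases x) simp
  also have "\<dots> = fst x *\<^sub>R L (1, 0) + snd x *\<^sub>R L (0, 1)"
    by (simp only: L.add L.scale)
  finally show ?thesis
    by (simp add: prod_eq_iff mult.commute)
qed

lemma bdd_above_pnorm_linear_psphere:
  fixes L :: "real \<times> real \<Rightarrow> real \<times> real"
  assumes "linear L" "p > 0"
  shows "bdd_above ((\<lambda>x. pnorm p (L x)) ` psphere p)"
proof -
  have "bounded_linear L"
    using assms(1) by (simp add: linear_conv_bounded_linear)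
  then obtain K where K: "\<And>x. norm (L x) \<le> norm x * K" "K > 0"
    using bounded_linear.pos_bounded by blast
  have abs_sum_le_norm: "\<bar>fst y\<bar> + \<bar>snd y\<bar> \<le> 2 * norm y" for y :: "real \<times> real"
    using norm_fst_le[of "fst y" "snd y"] norm_snd_le[of "snd y" "fst y"] by simp
  have "pnorm p (L x) \<le> 8 * K" if "x \<in> psphere p" for x
  proof -
    have "norm x \<le> \<bar>fst x\<bar> + \<bar>snd x\<bar>"
      using norm_Pair_le[of "fst x" "snd x"] by simp
    also have "\<dots> \<le> 2"
      using that abs_fst_le_pnorm[OF assms(2), of x] abs_snd_le_pnorm[OF assms(2), of x]
      by (simp add: psphere_def)
    finally have "norm x \<le> 2" .
    have "pnorm p (L x) \<le> 4 * norm (L x)"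
      using pnorm_le_abs_sum[OF assms(2), of "L x"] abs_sum_le_norm[of "L x"] by simp
    also have "\<dots> \<le> 4 * (norm x * K)"
      using K(1) by simp
    also have "\<dots> \<le> 8 * K"
      using \<open>norm x \<le> 2\<close> K(2) by simp
    finally show ?thesis .
  qed
  then show ?thesis
    by (intro bdd_aboveI2) blast
qed

lemma pnorm_le_popnorm:
  assumes "linear L" "p > 0" "x \<in> psphere p"
  shows "pnorm p (L x) \<le> popnorm p L"
  unfolding popnorm_def by (rule cSUP_upper[OF assms(3) bdd_above_pnorm_linear_psphere[OF assms(1,2)]])

lemma popnorm_eq_const:
  assumes "p > 0" "\<And>x. x \<in> psphere p \<Longrightarrow> pnorm p (A x) = c"
  shows "popnorm p A = c"
proof -
  have "popnorm p A = (SUP x\<in>psphere p. c)"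
    unfolding popnorm_def using assms(2) by (intro SUP_cong) auto
  moreover have "psphere p \<noteq> {}"
    using basis_in_psphere[OF assms(1)] by blast
  ultimately show ?thesis
    by simp
qed

lemma p_isometry_inverse:
  assumes "p > 0" "p_isometry p T"
  obtains g where "p_isometry p g" "\<And>x. g (T x) = x" "\<And>x. T (g x) = x"
proof -
  have lin: "linear T" and iso: "\<And>x. pnorm p (T x) = pnorm p x"
    using assms(2) by (auto simp: p_isometry_def)
  have "inj T"
  proof (rule injI)
    fix x y
    assume "T x = T y"
    then have "pnorm p (T (x - y)) = 0"
      using lin pnorm_eq_0_iff[OF assms(1)] by (simp add: linear_diff)
    then show "x = y"
      using iso pnorm_eq_0_iff[OF assms(1)] by simp
  qed
  then obtain g where "linear g" "\<And>x. g (T x) = x" "\<And>x. T (g x) = x"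
    using linear_injective_isomorphism[OF lin] by metis
  moreover have "pnorm p (g y) = pnorm p y" for y
    using iso[of "g y"] \<open>\<And>x. T (g x) = x\<close> by simp
  ultimately show ?thesis
    using that unfolding p_isometry_def by blast
qed

section \<open>Polynomial identities\<close>

lemma affine_power_identity_extend:
  fixes a b c d :: real
  assumes "finite S" "p < card S"
    and "\<And>s. s \<in> S \<Longrightarrow> (a * s + b) ^ p + (c * s + d) ^ p = s ^ p + 1"
  shows "(a * s + b) ^ p + (c * s + d) ^ p = s ^ p + 1"
proof -
  define Q where "Q = [:b, a:] ^ p + [:d, c:] ^ p - [:0, 1:] ^ p - 1"
  have poly_Q: "poly Q x = (a * x + b) ^ p + (c * x + d) ^ p - (x ^ p + 1)" for x
    unfolding Q_def by (simp add: algebra_simps)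
  have "Q = 0"
  proof (rule ccontr)
    assume "Q \<noteq> 0"
    have deg_linear_power: "degree ([:y, x:] ^ p) \<le> p" for x y :: real
      using degree_power_le[of "[:y, x:]" p] by (cases "x = 0") auto
    have "degree Q \<le> p"
      unfolding Q_def by (intro degree_diff_le degree_add_le deg_linear_power) simp_all
    have "S \<subseteq> {x. poly Q x = 0}"
      using assms(3) poly_Q by auto
    then have "card S \<le> card {x. poly Q x = 0}"
      by (intro card_mono poly_roots_finite \<open>Q \<noteq> 0\<close>)
    also have "\<dots> \<le> degree Q"
      by (rule card_poly_roots_bound[OF \<open>Q \<noteq> 0\<close>])
    finally show False
      using \<open>degree Q \<le> p\<close> assms(2) by linarith
  qed
  then show ?thesis
    using poly_Q[of s] by simp
qed

lemma affine_power_identity_low_coeffs: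
  fixes a b c d :: real
  assumes "2 \<le> p" "\<And>s. (a * s + b) ^ p + (c * s + d) ^ p = s ^ p + 1"
  shows "a * b ^ (p - 1) + c * d ^ (p - 1) = 0" "b ^ p + d ^ p = 1"
proof -
  show "b ^ p + d ^ p = 1"
    using assms(2)[of 0] assms(1) by simp
  have same_fun: "(\<lambda>s. (a * s + b) ^ p + (c * s + d) ^ p) = (\<lambda>s. s ^ p + 1)"
    using assms(2) by auto
  have "((\<lambda>s. (a * s + b) ^ p + (c * s + d) ^ p) has_real_derivative
      (real p * (a * 0 + b) ^ (p - 1) * a + real p * (c * 0 + d) ^ (p - 1) * c)) (at 0)"
    by (auto intro!: derivative_eq_intros)
  moreover have "((\<lambda>s. s ^ p + 1) has_real_derivative (real p * 0 ^ (p - 1) * 1 + 0)) (at (0::real))"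
    by (auto intro!: derivative_eq_intros)
  ultimately have "real p * b ^ (p - 1) * a + real p * d ^ (p - 1) * c = real p * 0 ^ (p - 1)"
    unfolding same_fun by (simp add: DERIV_unique)
  moreover have "(0::real) ^ (p - 1) = 0"
    using assms(1) by simp
  ultimately have "real p * (a * b ^ (p - 1) + c * d ^ (p - 1)) = 0"
    by (simp add: algebra_simps)
  then show "a * b ^ (p - 1) + c * d ^ (p - 1) = 0"
    using assms(1) by simp
qed

lemma cross_power_equations_imp_zero:
  fixes a c d e :: real
  assumes "2 \<le> n" "0 < a" "0 < e" "\<bar>c\<bar> < e"
    and E1: "a * c ^ n + d * e ^ n = 0"
    and E2: "c * a ^ n + e * d ^ n = 0"
  shows "c = 0" "d = 0"
proof -
  define X Y where "X = \<bar>c\<bar>" and "Y = \<bar>d\<bar>"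
  have "X \<ge> 0" "Y \<ge> 0"
    unfolding X_def Y_def by auto
  have A1: "a * X ^ n = e ^ n * Y"
    using arg_cong[OF E1[unfolded add_eq_0_iff], of abs] assms(2,3)
    unfolding X_def Y_def by (simp add: abs_mult power_abs mult.commute)
  have A2: "a ^ n * X = e * Y ^ n"
    using arg_cong[OF E2[unfolded add_eq_0_iff], of abs] assms(2,3)
    unfolding X_def Y_def by (simp add: abs_mult power_abs mult.commute)
  have "(a * X) ^ Suc n = (a * X ^ n) * (a ^ n * X)"
    by (simp add: power_mult_distrib mult_ac)
  also have "\<dots> = (e * Y) ^ Suc n"
    unfolding A1 A2 by (simp add: power_mult_distrib mult_ac)
  finally have aX_eq_eY: "a * X = e * Y"
    by (rule power_eq_imp_eq_base) (use assms(2,3) \<open>X \<ge> 0\<close> \<open>Y \<ge> 0\<close> in auto)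
  show "c = 0"
  proof (rule ccontr)
    assume "c \<noteq> 0"
    then have "X > 0"
      unfolding X_def by simp
    obtain m where n: "n = Suc m" "1 \<le> m"
      using assms(1) by (cases n) auto
    have "(a * X * e) * X ^ m = (a * X ^ n) * e"
      unfolding n by simp
    also have "\<dots> = e ^ n * (e * Y)"
      unfolding A1 by simp
    also have "\<dots> = (a * X * e) * e ^ m"
      unfolding n aX_eq_eY[symmetric] by simp
    finally have "X ^ m = e ^ m"
      using \<open>X > 0\<close> assms(2,3) by simp
    then have "X = e"
      by (rule power_eq_imp_eq_base) (use n(2) assms(3) \<open>X > 0\<close> in auto)
    then show False
      using assms(4) unfolding X_def by simp
  qed
  then show "d = 0"
    using E1 assms(1,3) by (simp add: power_0_left)
qed

lemma quadrant_psphere_ratio_inj: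
  assumes "p > 0"
  shows "inj_on (\<lambda>v. fst v / snd v) (psphere p \<inter> open_quadrant)"
proof (rule inj_onI)
  fix u v
  assume u: "u \<in> psphere p \<inter> open_quadrant" and v: "v \<in> psphere p \<inter> open_quadrant"
    and ratio: "fst u / snd u = fst v / snd v"
  define r where "r = fst u / snd u"
  have pos: "0 < fst u" "0 < snd u" "0 < fst v" "0 < snd v"
    using u v by (auto simp: open_quadrant_def)
  have fst_eq: "fst u = r * snd u" "fst v = r * snd v"
    using pos ratio unfolding r_def by (simp_all add: field_simps)
  have "fst u ^ p + snd u ^ p = 1" "fst v ^ p + snd v ^ p = 1"
    using u v psphere_quadrant_iff[OF assms, of u] psphere_quadrant_iff[OF assms, of v] by auto
  then have "(r ^ p + 1) * snd u ^ p = 1" "(r ^ p + 1) * snd v ^ p = 1"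
    unfolding fst_eq by (simp_all add: power_mult_distrib algebra_simps)
  moreover have "0 < r ^ p + 1"
    using pos unfolding r_def by (simp add: add_pos_pos)
  ultimately have "snd u ^ p = snd v ^ p"
    by (metis less_irrefl mult_left_cancel)
  then have "snd u = snd v"
    using pos assms by (simp add: power_eq_iff_eq_base)
  then show "u = v"
    using fst_eq by (simp add: prod_eq_iff)
qed

lemma ratio_power_identity:
  fixes a b c d :: real
  assumes "p > 0" "finite U" "p < card U" "U \<subseteq> psphere p \<inter> open_quadrant"
    and "\<And>v. v \<in> U \<Longrightarrow> (a * fst v + b * snd v) ^ p + (c * fst v + d * snd v) ^ p = 1"
  shows "(a * s + b) ^ p + (c * s + d) ^ p = s ^ p + 1"
proof (rule affine_power_identity_extend)
  let ?S = "(\<lambda>v. fst v / snd v) ` U"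
  show "finite ?S"
    using assms(2) by simp
  show "p < card ?S"
    using card_image[OF inj_on_subset[OF quadrant_psphere_ratio_inj[OF assms(1)] assms(4)]] assms(3)
    by simp
  fix t
  assume "t \<in> ?S"
  then obtain v where v: "v \<in> U" "t = fst v / snd v"
    by auto
  have "v \<in> psphere p \<inter> open_quadrant"
    using v(1) assms(4) by blast
  then have pos: "0 < snd v" and sph: "fst v ^ p + snd v ^ p = 1"
    using psphere_quadrant_iff[OF assms(1), of v] by (auto simp: open_quadrant_def)
  have "a * t + b = (a * fst v + b * snd v) / snd v" "c * t + d = (c * fst v + d * snd v) / snd v"
    unfolding v(2) using pos by (simp_all add: field_simps)
  then have "(a * t + b) ^ p + (c * t + d) ^ p = 1 / snd v ^ p"
    using assms(5)[OF v(1)] by (simp add: power_divide add_divide_distrib[symmetric])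
  also have "\<dots> = (fst v ^ p + snd v ^ p) / snd v ^ p"
    using sph by simp
  also have "\<dots> = t ^ p + 1"
    unfolding v(2) using pos by (simp add: power_divide add_divide_distrib)
  finally show "(a * t + b) ^ p + (c * t + d) ^ p = t ^ p + 1" .
qed

section \<open>Rigidity of near-identity operators\<close>

lemma linear_eq_id_if_preserves_quadrant_points:
  fixes B :: "real \<times> real \<Rightarrow> real \<times> real"
  assumes "3 \<le> p" "linear B"
    and "0 < fst (B (1, 0))" "0 < snd (B (0, 1))" "\<bar>fst (B (0, 1))\<bar> < snd (B (0, 1))"
    and "finite U" "p < card U" "U \<subseteq> psphere p \<inter> open_quadrant"
    and "B ` U \<subseteq> psphere p \<inter> open_quadrant"
  shows "B x = x"
proof -
  have "p > 0"
    using assms(1) by simp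
  define b11 b21 b12 b22
    where "b11 = fst (B (1, 0))" and "b21 = snd (B (1, 0))"
      and "b12 = fst (B (0, 1))" and "b22 = snd (B (0, 1))"
  have B_eq: "B y = (b11 * fst y + b12 * snd y, b21 * fst y + b22 * snd y)" for y
    unfolding b11_def b12_def b21_def b22_def by (rule linear_pair_matrix[OF assms(2)])
  have image: "(b11 * fst v + b12 * snd v) ^ p + (b21 * fst v + b22 * snd v) ^ p = 1" if "v \<in> U" for v
    using assms(9) that psphere_quadrant_iff[OF \<open>p > 0\<close>, of "B v"] unfolding B_eq by auto
  have id1: "(b11 * s + b12) ^ p + (b21 * s + b22) ^ p = s ^ p + 1" for s
    by (rule ratio_power_identity[OF \<open>p > 0\<close> assms(6-8) image])
  have id2: "(b12 * s + b11) ^ p + (b22 * s + b21) ^ p = s ^ p + 1" for s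
  proof (rule ratio_power_identity[OF \<open>p > 0\<close>, of "prod.swap ` U"])
    show "finite (prod.swap ` U)" "p < card (prod.swap ` U)"
      using assms(6,7) by (simp_all add: card_image)
    show "prod.swap ` U \<subseteq> psphere p \<inter> open_quadrant"
      using assms(8) by (auto simp: psphere_iff[OF \<open>p > 0\<close>] open_quadrant_def add.commute)
    fix v
    assume "v \<in> prod.swap ` U"
    then show "(b12 * fst v + b11 * snd v) ^ p + (b22 * fst v + b21 * snd v) ^ p = 1"
      using image by (auto simp: add.commute)
  qed
  have "2 \<le> p" "2 \<le> p - 1"
    using assms(1) by auto
  note coeffs1 = affine_power_identity_low_coeffs[OF \<open>2 \<le> p\<close> id1]
   and coeffs2 = affine_power_identity_low_coeffs[OF \<open>2 \<le> p\<close> id2]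
  have "b12 = 0" "b21 = 0"
    using cross_power_equations_imp_zero[OF \<open>2 \<le> p - 1\<close> _ _ _ coeffs1(1) coeffs2(1)] assms(3-5)
    unfolding b11_def b12_def b21_def b22_def by auto
  then have "b11 ^ p = 1 ^ p" "b22 ^ p = 1 ^ p"
    using coeffs1(2) coeffs2(2) \<open>p > 0\<close> by (simp_all add: power_0_left)
  then have "b11 = 1" "b22 = 1"
    using power_eq_imp_eq_base[of b11 p 1] power_eq_imp_eq_base[of b22 p 1] assms(3,4) \<open>p > 0\<close>
    unfolding b11_def b22_def by auto
  then show "B x = x"
    using B_eq[of x] \<open>b12 = 0\<close> \<open>b21 = 0\<close> by (simp add: prod_eq_iff)
qed

lemma psphere_spread_points:
  assumes "p > 0"
  obtains x :: "nat \<Rightarrow> real \<times> real"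
  where "\<And>k. k \<le> n \<Longrightarrow> x k \<in> psphere p"
    and "\<And>k. k \<le> n \<Longrightarrow> 1 / 4 \<le> fst (x k)" "\<And>k. k \<le> n \<Longrightarrow> 1 / 2 \<le> snd (x k)"
    and "\<And>j k. j \<le> n \<Longrightarrow> k \<le> n \<Longrightarrow> j \<noteq> k \<Longrightarrow> 1 / (4 * (real n + 1)) \<le> \<bar>fst (x j) - fst (x k)\<bar>"
proof -
  define h where "h = 1 / (4 * (real n + 1))"
  define a where "a k = 1 / 4 + real k * h" for k
  define x where "x k = (a k, (1 - a k ^ p) powr (1 / real p))" for k
  have a_range: "1 / 4 \<le> a k" "a k \<le> 1 / 2" if "k \<le> n" for k
  proof -
    have "real k * h \<le> real n * h"
      using that by (intro mult_right_mono) (simp_all add: h_def)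
    also have "\<dots> \<le> 1 / 4"
      unfolding h_def by (simp add: field_simps)
    finally show "a k \<le> 1 / 2"
      unfolding a_def by simp
    show "1 / 4 \<le> a k"
      unfolding a_def h_def by simp
  qed
  have "h \<le> \<bar>a j - a k\<bar>" if "j \<noteq> k" for j k
  proof -
    have "h > 0"
      unfolding h_def by simp
    have "1 \<le> \<bar>real j - real k\<bar>"
      using that by linarith
    then have "1 * h \<le> \<bar>real j - real k\<bar> * h"
      using \<open>h > 0\<close> by (intro mult_right_mono) simp_all
    also have "\<dots> = \<bar>a j - a k\<bar>"
      unfolding a_def using \<open>h > 0\<close> by (simp add: abs_mult left_diff_distrib[symmetric])
    finally show ?thesis
      by simp
  qed
  then show ?thesis
  proof (intro that[of x])
    fix k
    assume "k \<le> n"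
    then show "x k \<in> psphere p" "1 / 4 \<le> fst (x k)" "1 / 2 \<le> snd (x k)"
      using psphere_point_with_fst[OF assms, of "a k"] a_range[of k] unfolding x_def by auto
  qed (simp add: x_def h_def)
qed

lemma norm_attaining_point_in_quadrant:
  fixes B :: "real \<times> real \<Rightarrow> real \<times> real"
  assumes "p > 0" "\<epsilon> < 1 / 16"
    and near: "\<And>x. x \<in> psphere p \<Longrightarrow> pnorm p (B x - x) < \<epsilon>"
    and attain: "\<And>x. x \<in> psphere p \<Longrightarrow> \<exists>u\<in>psphere p. pnorm p (B u) = 1 \<and> pnorm p (u - x) < \<epsilon>"
    and "w \<in> psphere p" "1 / 4 \<le> fst w" "1 / 2 \<le> snd w"
  obtains u where "u \<in> psphere p \<inter> open_quadrant" "B u \<in> psphere p \<inter> open_quadrant"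
    "\<bar>fst u - fst w\<bar> < \<epsilon>"
proof -
  obtain u where u: "u \<in> psphere p" "pnorm p (B u) = 1" "pnorm p (u - w) < \<epsilon>"
    using attain[OF assms(5)] by blast
  have u_near: "\<bar>fst u - fst w\<bar> < \<epsilon>" "\<bar>snd u - snd w\<bar> < \<epsilon>"
    using abs_fst_le_pnorm[OF assms(1), of "u - w"] abs_snd_le_pnorm[OF assms(1), of "u - w"] u(3)
    by auto
  have "u \<in> open_quadrant"
    using u(3) assms(2,6,7) by (intro open_quadrant_if_pnorm_diff_less[OF assms(1)]) auto
  moreover have "B u \<in> open_quadrant"
    using u_near assms(2,6,7) by (intro open_quadrant_if_pnorm_diff_less[OF assms(1) near[OF u(1)]]) auto
  ultimately show ?thesis
    using that u u_near(1) by (simp add: psphere_def)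
qed

lemma norm_attaining_quadrant_points:
  fixes B :: "real \<times> real \<Rightarrow> real \<times> real"
  assumes "p > 0" "\<epsilon> < 1 / (8 * (real p + 1))"
    and near: "\<And>x. x \<in> psphere p \<Longrightarrow> pnorm p (B x - x) < \<epsilon>"
    and attain: "\<And>x. x \<in> psphere p \<Longrightarrow> \<exists>u\<in>psphere p. pnorm p (B u) = 1 \<and> pnorm p (u - x) < \<epsilon>"
  obtains U where "finite U" "p < card U" "U \<subseteq> psphere p \<inter> open_quadrant"
    "B ` U \<subseteq> psphere p \<inter> open_quadrant"
proof -
  have "1 / (8 * (real p + 1)) \<le> 1 / 16"
    using assms(1) by (simp add: field_simps)
  then have "\<epsilon> < 1 / 16"
    using assms(2) by linarith
  have spread: "2 * \<epsilon> < 1 / (4 * (real p + 1))"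
    using assms(2) by (simp add: field_simps)
  obtain w where w: "\<And>k. k \<le> p \<Longrightarrow> w k \<in> psphere p"
    "\<And>k. k \<le> p \<Longrightarrow> 1 / 4 \<le> fst (w k)" "\<And>k. k \<le> p \<Longrightarrow> 1 / 2 \<le> snd (w k)"
    "\<And>j k. j \<le> p \<Longrightarrow> k \<le> p \<Longrightarrow> j \<noteq> k \<Longrightarrow> 1 / (4 * (real p + 1)) \<le> \<bar>fst (w j) - fst (w k)\<bar>"
    using psphere_spread_points[OF assms(1)] by blast
  have "\<forall>k\<in>{..p}. \<exists>v. v \<in> psphere p \<inter> open_quadrant \<and> B v \<in> psphere p \<inter> open_quadrant
      \<and> \<bar>fst v - fst (w k)\<bar> < \<epsilon>"
    using norm_attaining_point_in_quadrant[OF assms(1) \<open>\<epsilon> < 1 / 16\<close> near attain w(1-3)] by blast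
  from bchoice[OF this] obtain u where u: "\<forall>k\<in>{..p}. u k \<in> psphere p \<inter> open_quadrant
      \<and> B (u k) \<in> psphere p \<inter> open_quadrant \<and> \<bar>fst (u k) - fst (w k)\<bar> < \<epsilon>"
    by blast
  have "inj_on u {..p}"
  proof (rule inj_onI, rule ccontr)
    fix j k
    assume jk: "j \<in> {..p}" "k \<in> {..p}" and "u j = u k" "j \<noteq> k"
    have "1 / (4 * (real p + 1)) \<le> \<bar>fst (w j) - fst (w k)\<bar>"
      using w(4) jk \<open>j \<noteq> k\<close> by simp
    moreover have "\<bar>fst (u j) - fst (w j)\<bar> < \<epsilon>" "\<bar>fst (u k) - fst (w k)\<bar> < \<epsilon>"
      using u jk by simp_all
    moreover have "fst (u j) = fst (u k)"
      using \<open>u j = u k\<close> by simp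
    ultimately show False
      using spread by arith
  qed
  then show ?thesis
    using u by (intro that[of "u ` {..p}"]) (auto simp: card_image)
qed

lemma linear_eq_id_if_near_id_and_norm_attaining:
  fixes B :: "real \<times> real \<Rightarrow> real \<times> real"
  assumes "3 \<le> p" "linear B" "\<epsilon> < 1 / (8 * (real p + 1))"
    and near: "\<And>x. x \<in> psphere p \<Longrightarrow> pnorm p (B x - x) < \<epsilon>"
    and attain: "\<And>x. x \<in> psphere p \<Longrightarrow> \<exists>u\<in>psphere p. pnorm p (B u) = 1 \<and> pnorm p (u - x) < \<epsilon>"
  shows "B x = x"
proof -
  have "p > 0"
    using assms(1) by simp
  have "1 / (8 * (real p + 1)) \<le> 1 / 2"
    by (simp add: field_simps)
  then have "\<epsilon> < 1 / 2"
    using assms(3) by linarith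
  have coord_near: "\<bar>fst (B y) - fst y\<bar> < \<epsilon>" "\<bar>snd (B y) - snd y\<bar> < \<epsilon>" if "y \<in> psphere p" for y
    using abs_fst_le_pnorm[OF \<open>p > 0\<close>, of "B y - y"] abs_snd_le_pnorm[OF \<open>p > 0\<close>, of "B y - y"]
      near[OF that] by auto
  have "0 < fst (B (1, 0))" "0 < snd (B (0, 1))" "\<bar>fst (B (0, 1))\<bar> < snd (B (0, 1))"
    using coord_near[OF basis_in_psphere(1)[OF \<open>p > 0\<close>]]
      coord_near[OF basis_in_psphere(2)[OF \<open>p > 0\<close>]] \<open>\<epsilon> < 1 / 2\<close> by auto
  moreover obtain U where "finite U" "p < card U" "U \<subseteq> psphere p \<inter> open_quadrant"
    "B ` U \<subseteq> psphere p \<inter> open_quadrant"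
    using norm_attaining_quadrant_points[OF \<open>p > 0\<close> assms(3) near attain] by blast
  ultimately show "B x = x"
    by (rule linear_eq_id_if_preserves_quadrant_points[OF assms(1,2)])
qed

lemma uniform_BPB_approx_self:
  assumes "p > 0" "p_isometry p T" "\<epsilon> > 0"
  shows "uniform_BPB_approx p \<epsilon> T T"
proof -
  have "linear T" and iso: "\<And>x. pnorm p (T x) = pnorm p x"
    using assms(2) by (auto simp: p_isometry_def)
  have "popnorm p T = 1"
    using iso by (intro popnorm_eq_const[OF assms(1)]) (simp add: psphere_def)
  moreover have "popnorm p (\<lambda>x. T x - T x) = 0"
    using pnorm_eq_0_iff[OF assms(1)] by (intro popnorm_eq_const[OF assms(1)]) simp
  moreover have "\<exists>u0\<in>psphere p. pnorm p (T u0) = 1 \<and> pnorm p (u0 - x0) < \<epsilon>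
      \<and> popnorm p (\<lambda>x. T x - T x) < \<epsilon>" if "x0 \<in> psphere p" for x0
    using that iso assms(3) \<open>popnorm p (\<lambda>x. T x - T x) = 0\<close> pnorm_eq_0_iff[OF assms(1), of 0]
    by (intro bexI[of _ x0]) (simp_all add: psphere_def)
  ultimately show ?thesis
    unfolding uniform_BPB_approx_def using \<open>linear T\<close> zero_less_one by blast
qed

lemma uniform_BPB_approx_isometryD:
  assumes "p > 0" "p_isometry p T" "uniform_BPB_approx p \<epsilon> T A"
  shows "linear A" "popnorm p (\<lambda>x. A x - T x) < \<epsilon>"
    and "\<And>x. x \<in> psphere p \<Longrightarrow> \<exists>u\<in>psphere p. pnorm p (A u) = 1 \<and> pnorm p (u - x) < \<epsilon>"
proof -
  obtain \<delta> where "linear A" "\<delta> > 0"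
    and approx: "\<forall>x0\<in>psphere p. pnorm p (T x0) > 1 - \<delta> \<longrightarrow>
        (\<exists>u0\<in>psphere p. pnorm p (A u0) = 1 \<and> pnorm p (u0 - x0) < \<epsilon>
                          \<and> popnorm p (\<lambda>x. A x - T x) < \<epsilon>)"
    using assms(3) unfolding uniform_BPB_approx_def by blast
  \<comment> \<open>T is an isometry, so the premise on x0 holds at every point of the sphere.\<close>
  have attain: "\<exists>u\<in>psphere p. pnorm p (A u) = 1 \<and> pnorm p (u - x) < \<epsilon>
      \<and> popnorm p (\<lambda>x. A x - T x) < \<epsilon>" if "x \<in> psphere p" for x
  proof -
    have "pnorm p (T x) = pnorm p x"
      using assms(2) unfolding p_isometry_def by blast
    then have "pnorm p (T x) > 1 - \<delta>"
      using that \<open>\<delta> > 0\<close> by (simp add: psphere_def)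
    then show ?thesis
      using approx that by blast
  qed
  show "linear A"
    by fact
  show "popnorm p (\<lambda>x. A x - T x) < \<epsilon>"
    using attain[OF basis_in_psphere(1)[OF assms(1)]] by blast
  show "\<exists>u\<in>psphere p. pnorm p (A u) = 1 \<and> pnorm p (u - x) < \<epsilon>" if "x \<in> psphere p" for x
    using attain[OF that] by blast
qed

lemma uniform_BPB_approx_of_isometry_eq:
  assumes "3 \<le> p" "p_isometry p T" "\<epsilon> < 1 / (8 * (real p + 1))" "uniform_BPB_approx p \<epsilon> T A"
  shows "A = T"
proof -
  have "p > 0"
    using assms(1) by simp
  note approx = uniform_BPB_approx_isometryD[OF \<open>p > 0\<close> assms(2,4)]
  have "linear T"
    using assms(2) by (simp add: p_isometry_def)
  obtain g where "p_isometry p g" and gT: "\<And>x. g (T x) = x" and Tg: "\<And>x. T (g x) = x"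
    using p_isometry_inverse[OF \<open>p > 0\<close> assms(2)] by blast
  then have "linear g" and iso_g: "\<And>x. pnorm p (g x) = pnorm p x"
    by (auto simp: p_isometry_def)
  have "g (A x) = x" for x
  proof (rule linear_eq_id_if_near_id_and_norm_attaining[OF assms(1) _ assms(3)])
    show "linear (\<lambda>x. g (A x))"
      using linear_compose[OF approx(1) \<open>linear g\<close>] by (simp add: o_def)
    fix x
    assume "x \<in> psphere p"
    have "g (A x) - x = g (A x - T x)"
      using \<open>linear g\<close> gT by (simp add: linear_diff)
    then have "pnorm p (g (A x) - x) = pnorm p (A x - T x)"
      by (simp add: iso_g)
    also have "\<dots> \<le> popnorm p (\<lambda>x. A x - T x)"
      using linear_compose_sub[OF approx(1) \<open>linear T\<close>] \<open>x \<in> psphere p\<close>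
      by (rule pnorm_le_popnorm[OF _ \<open>p > 0\<close>])
    finally show "pnorm p (g (A x) - x) < \<epsilon>"
      using approx(2) by linarith
    show "\<exists>u\<in>psphere p. pnorm p (g (A u)) = 1 \<and> pnorm p (u - x) < \<epsilon>"
      using approx(3)[OF \<open>x \<in> psphere p\<close>] by (simp add: iso_g)
  qed
  then show "A = T"
    using Tg by (metis ext)
qed

theorem theorem2p9:
  fixes p :: nat and T :: "real \<times> real \<Rightarrow> real \<times> real"
  assumes "p > 2"
    and "p_isometry p T"
  shows "\<exists>\<epsilon>0>0. \<forall>\<epsilon>. 0 < \<epsilon> \<and> \<epsilon> < \<epsilon>0 \<longrightarrow>
           uniform_BPB_approx p \<epsilon> T T \<and>
           (\<forall>A. uniform_BPB_approx p \<epsilon> T A \<longrightarrow> A = T)"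
proof -
  have "3 \<le> p"
    using assms(1) by simp
  have "uniform_BPB_approx p \<epsilon> T T \<and> (\<forall>A. uniform_BPB_approx p \<epsilon> T A \<longrightarrow> A = T)"
    if "0 < \<epsilon>" "\<epsilon> < 1 / (8 * (real p + 1))" for \<epsilon>
    using uniform_BPB_approx_self[OF _ assms(2) that(1)]
      uniform_BPB_approx_of_isometry_eq[OF \<open>3 \<le> p\<close> assms(2) that(2)] assms(1)
    by auto
  then show ?thesis
    by (intro exI[of _ "1 / (8 * (real p + 1))"]) auto
qed

end
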